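(* For the system $$u_{0,0}-v_{1,1}=0,\qquad (u_{1,0}-u_{0,0})(v_{1,0}-u_{0,0})-(u_{0,1}-u_{0,0})(v_{0,1}-u_{0,0})=0,$$ the following second order flow is a symmetry: $$\frac{\partial u_{0,0}}{\partial s_2}=(u_{0,0}-v_{1,0})\big(u_{2,0}v_{2,0}-(u_{2,0}+v_{2,0}-v_{0,0})u_{1,0}+(u_{1,0}-v_{0,0})u_{0,0}\big),$$ $$\frac{\partial v_{0,0}}{\partial s_2}=(u_{-1,0}-v_{0,0})\big(u_{-2,0}v_{-2,0}-(u_{-2,0}+v_{-2,0}-u_{0,0})v_{-1,0}+(v_{-1,0}-u_{0,0})v_{0,0}\big).$$
   Context: Unknowns $u,v$ on $\mathbb Z^2$, $u_{i,j}=u(n+i,m+j)$, similarly $v$. Shifts $\mathcal S:n\mapsto n+1$, $\mathcal T:m\mapsto m+1$. For a quad system $\boldsymbol Q(\boldsymbol u_{0,0},\boldsymbol u_{1,0},\boldsymbol u_{0,1},\boldsymbol u_{1,1})=\boldsymbol 0$ with $\boldsymbol u=(u,v)$ and Jacobians $\mathrm Q_{(p,q)}=\partial\boldsymbol Q/\partial\boldsymbol u_{p,q}$, a vector function $\boldsymbol F=(F^{(1)},F^{(2)})$ of finitely many shifts of $\boldsymbol u$ is a symmetry, written $\partial_t u_{0,0}=F^{(1)}$, $\partial_t v_{0,0}=F^{(2)}$, if $\mathrm Q_{(0,0)}\boldsymbol F+\mathrm Q_{(1,0)}\mathcal S(\boldsymbol F)+\mathrm Q_{(0,1)}\mathcal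 T(\boldsymbol F)+\mathrm Q_{(1,1)}\mathcal S\mathcal T(\boldsymbol F)=\boldsymbol 0$ holds on all solutions of the system. *)

theory Defs
  imports "HOL-Analysis.Analysis"
begin

type_synonym field_pt = "complex \<times> complex"
type_synonym quad_arg = "field_pt \<times> field_pt \<times> field_pt \<times> field_pt"
type_synonym lattice_fn = "int \<Rightarrow> int \<Rightarrow> complex"

definition pt :: "lattice_fn \<Rightarrow> lattice_fn \<Rightarrow> int \<Rightarrow> int \<Rightarrow> field_pt" where
  "pt u v n m = (u n m, v n m)"

definition quad_at :: "lattice_fn \<Rightarrow> lattice_fn \<Rightarrow> int \<Rightarrow> int \<Rightarrow> quad_arg" where
  "quad_at u v n m = (pt u v n m, pt u v (n+1) m, pt u v n (m+1), pt u v (n+1) (m+1))"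

text \<open>F is a symmetry iff on every solution
  of the system the linearisation
  Q_(0,0) F + Q_(1,0) S(F) + Q_(0,1) T(F) + Q_(1,1) ST(F)
  vanishes at every lattice point; the Jacobians are encoded by the Frechet
  derivative of Q at the quadrilateral.\<close>
definition quad_symmetry ::
  "(quad_arg \<Rightarrow> field_pt) \<Rightarrow> (lattice_fn \<Rightarrow> lattice_fn \<Rightarrow> int \<Rightarrow> int \<Rightarrow> field_pt) \<Rightarrow> bool" where
  "quad_symmetry Q F \<longleftrightarrow>
     (\<forall>u v. (\<forall>n m. Q (quad_at u v n m) = 0) \<longrightarrow>
        (\<forall>n m. \<exists>D. (Q has_derivative D) (at (quad_at u v n m)) \<and>
            D (F u v n m, F u v (n+1) m, F u v n (m+1), F u v (n+1) (m+1)) = 0))"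

fun Qsys :: "quad_arg \<Rightarrow> field_pt" where
  "Qsys ((u00, v00), (u10, v10), (u01, v01), (u11, v11)) =
     (u00 - v11,
      (u10 - u00) * (v10 - u00) - (u01 - u00) * (v01 - u00))"

definition Fflow :: "lattice_fn \<Rightarrow> lattice_fn \<Rightarrow> int \<Rightarrow> int \<Rightarrow> field_pt" where
  "Fflow u v n m =
     ((u n m - v (n+1) m) *
        (u (n+2) m * v (n+2) m - (u (n+2) m + v (n+2) m - v n m) * u (n+1) m
         + (u (n+1) m - v n m) * u n m),
      (u (n-1) m - v n m) *
        (u (n-2) m * v (n-2) m - (u (n-2) m + v (n-2) m - u n m) * v (n-1) m
         + (v (n-1) m - u n m) * v n m))"

end

theory Submission
  imports Defs
begin

text \<open>On a solution the second field is the diagonal shift of the first, v(n,m) = u(n-1,m-1),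
  and u satisfies the five-point equation
  (u(n+1,m) - u(n,m)) (u(n,m-1) - u(n,m)) = (u(n,m+1) - u(n,m)) (u(n-1,m) - u(n,m)).
  Modulo this equation both components of the flow are the same scalar flow G, the second one
  shifted by (-1,-1).  The first component of the linearised system then vanishes identically,
  and the second is the linearisation of the five-point equation along G, which lies in the ideal
  generated by ten shifts of that equation.\<close>

definition cross_eq :: "(int \<Rightarrow> int \<Rightarrow> 'a::comm_ring) \<Rightarrow> int \<Rightarrow> int \<Rightarrow> bool" where
  "cross_eq u n m \<longleftrightarrow>
     (u (n+1) m - u n m) * (u n (m-1) - u n m) = (u n (m+1) - u n m) * (u (n-1) m - u n m)"

definition cross_linearised ::
  "(int \<Rightarrow> int \<Rightarrow> 'a::comm_ring) \<Rightarrow> (int \<Rightarrow> int \<Rightarrow> 'a) \<Rightarrow> int \<Rightarrow> int \<Rightarrow> 'a" where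
  "cross_linearised u w n m =
     (w (n+1) m - w n m) * (u n (m-1) - u n m) + (u (n+1) m - u n m) * (w n (m-1) - w n m)
     - (w n (m+1) - w n m) * (u (n-1) m - u n m) - (u n (m+1) - u n m) * (w (n-1) m - w n m)"

definition cross_flow :: "(int \<Rightarrow> int \<Rightarrow> 'a::comm_ring) \<Rightarrow> int \<Rightarrow> int \<Rightarrow> 'a" where
  "cross_flow u n m =
     (u n m - u n (m-1)) *
       (u (n+2) m * u (n+1) (m-1) - (u (n+2) m + u (n+1) (m-1) - u (n-1) (m-1)) * u (n+1) m
        + (u (n+1) m - u (n-1) (m-1)) * u n m)"

definition translate :: "(int \<Rightarrow> int \<Rightarrow> 'a) \<Rightarrow> int \<Rightarrow> int \<Rightarrow> int \<Rightarrow> int \<Rightarrow> 'a" where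
  "translate u a b = (\<lambda>n m. u (n+a) (m+b))"

lemma cross_eq_translate: "cross_eq (translate u a b) n m \<longleftrightarrow> cross_eq u (n+a) (m+b)"
  by (simp add: cross_eq_def translate_def algebra_simps)

lemma cross_flow_translate: "cross_flow (translate u a b) = translate (cross_flow u) a b"
  by (simp add: fun_eq_iff cross_flow_def translate_def algebra_simps)

lemma cross_linearised_translate:
  "cross_linearised (translate u a b) (translate w a b) n m = cross_linearised u w (n+a) (m+b)"
  by (simp add: cross_linearised_def translate_def algebra_simps)

lemma Fflow_translate: "Fflow (translate u a b) (translate v a b) n m = Fflow u v (n+a) (m+b)"
  by (simp add: Fflow_def translate_def algebra_simps)

text \<open>Working at the origin keeps all lattice indices numerals, so that \<open>algebra\<close> treats every
  shift of u as one indeterminate; translation invariance then gives the general case.\<close>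

lemma cross_flow_symmetry_origin:
  fixes u :: "int \<Rightarrow> int \<Rightarrow> 'a::idom"
  assumes "\<And>n m. cross_eq u n m"
  shows "cross_linearised u (cross_flow u) 0 0 = 0"
proof -
  note c = assms[unfolded cross_eq_def]
  note instances = c[of 0 0] c[of 1 0] c[of "-1" 0] c[of 0 1] c[of 0 "-1"] c[of 1 1]
    c[of 1 "-1"] c[of "-1" "-1"] c[of 2 0] c[of "-2" 0]
  show ?thesis
    unfolding cross_linearised_def cross_flow_def
    apply simp
    using instances[simplified] by algebra
qed

lemma cross_flow_symmetry:
  fixes u :: "int \<Rightarrow> int \<Rightarrow> 'a::idom"
  assumes "\<And>n m. cross_eq u n m"
  shows "cross_linearised u (cross_flow u) n m = 0"
proof -
  have "cross_linearised (translate u n m) (cross_flow (translate u n m)) 0 0 = 0"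
    using assms by (intro cross_flow_symmetry_origin) (simp add: cross_eq_translate)
  then show ?thesis by (simp add: cross_flow_translate cross_linearised_translate)
qed

lemma Fflow_cross_flow_origin:
  assumes v: "\<And>n m. v n m = u (n-1) (m-1)" and cross: "\<And>n m. cross_eq u n m"
  shows "Fflow u v 0 0 = (cross_flow u 0 0, cross_flow u (-1) (-1))"
proof -
  note c = cross[unfolded cross_eq_def]
  note instances = c[of "-1" "-1"] c[of 0 "-1"] c[of "-2" "-1"]
  show ?thesis
    unfolding Fflow_def cross_flow_def v
    apply simp
    using instances[simplified] by algebra
qed

lemma Fflow_cross_flow:
  assumes v: "\<And>n m. v n m = u (n-1) (m-1)" and cross: "\<And>n m. cross_eq u n m"
  shows "Fflow u v n m = (cross_flow u n m, cross_flow u (n-1) (m-1))"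
proof -
  have "Fflow (translate u n m) (translate v n m) 0 0
      = (cross_flow (translate u n m) 0 0, cross_flow (translate u n m) (-1) (-1))"
  proof (rule Fflow_cross_flow_origin)
    show "translate v n m p q = translate u n m (p-1) (q-1)" for p q
      using v by (simp add: translate_def algebra_simps)
    show "cross_eq (translate u n m) p q" for p q
      using cross by (simp add: cross_eq_translate)
  qed
  then show ?thesis by (simp add: Fflow_translate cross_flow_translate) (simp add: translate_def)
qed

fun Qsys_linear :: "quad_arg \<Rightarrow> quad_arg \<Rightarrow> field_pt" where
  "Qsys_linear ((u00, v00), (u10, v10), (u01, v01), (u11, v11))
               ((du00, dv00), (du10, dv10), (du01, dv01), (du11, dv11)) =
     (du00 - dv11,
      (du10 - du00) * (v10 - u00) + (u10 - u00) * (dv10 - du00)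
      - (du01 - du00) * (v01 - u00) - (u01 - u00) * (dv01 - du00))"

lemma has_derivative_Qsys: "(Qsys has_derivative Qsys_linear q) (at q)"
proof -
  have Qsys_proj: "Qsys = (\<lambda>q. (fst (fst q) - snd (snd (snd (snd q))),
      (fst (fst (snd q)) - fst (fst q)) * (snd (fst (snd q)) - fst (fst q))
      - (fst (fst (snd (snd q))) - fst (fst q)) * (snd (fst (snd (snd q))) - fst (fst q))))"
    by (rule ext, cases rule: Qsys.cases) auto
  show ?thesis
    unfolding Qsys_proj
    by (cases q rule: Qsys.cases)
      (auto intro!: derivative_eq_intros simp: fun_eq_iff split_paired_all algebra_simps)
qed

lemma Qsys_quad_at:
  "Qsys (quad_at u v n m) =
     (u n m - v (n+1) (m+1),
      (u (n+1) m - u n m) * (v (n+1) m - u n m) - (u n (m+1) - u n m) * (v n (m+1) - u n m))"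
  by (simp add: quad_at_def pt_def)

lemma Qsys_solution_shift:
  assumes "\<And>n m. Qsys (quad_at u v n m) = 0"
  shows "v n m = u (n-1) (m-1)"
  using assms[of "n-1" "m-1"] by (simp add: Qsys_quad_at zero_prod_def)

lemma Qsys_solution_cross_eq:
  assumes "\<And>n m. Qsys (quad_at u v n m) = 0"
  shows "cross_eq u n m"
  using assms[of n m]
  by (simp add: Qsys_quad_at Qsys_solution_shift[OF assms] zero_prod_def cross_eq_def)

lemma Qsys_linear_quad_at:
  assumes "\<And>n m. v n m = u (n-1) (m-1)" and "\<And>n m. z n m = w (n-1) (m-1)"
  shows "Qsys_linear (quad_at u v n m) (quad_at w z n m) = (0, cross_linearised u w n m)"
  by (simp add: quad_at_def pt_def assms cross_linearised_def algebra_simps)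

theorem mainTheorem10:
  shows "quad_symmetry Qsys Fflow"
  unfolding quad_symmetry_def
proof (intro allI impI)
  fix u v n m
  assume "\<forall>n m. Qsys (quad_at u v n m) = 0"
  then have v: "\<And>n m. v n m = u (n-1) (m-1)" and cross: "\<And>n m. cross_eq u n m"
    by (auto intro: Qsys_solution_shift Qsys_solution_cross_eq)
  let ?G = "cross_flow u"
  have "(Fflow u v n m, Fflow u v (n+1) m, Fflow u v n (m+1), Fflow u v (n+1) (m+1))
      = quad_at ?G (\<lambda>p q. ?G (p-1) (q-1)) n m"
    by (simp add: quad_at_def pt_def Fflow_cross_flow[OF v cross])
  moreover have "Qsys_linear (quad_at u v n m) (quad_at ?G (\<lambda>p q. ?G (p-1) (q-1)) n m) = 0"
    by (simp add: Qsys_linear_quad_at v cross_flow_symmetry cross zero_prod_def)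
  ultimately show "\<exists>D. (Qsys has_derivative D) (at (quad_at u v n m)) \<and>
      D (Fflow u v n m, Fflow u v (n+1) m, Fflow u v n (m+1), Fflow u v (n+1) (m+1)) = 0"
    using has_derivative_Qsys by metis
qed

end
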